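(* Let $d>1$ and let $s$ be an integer with $1<s<2^d$, written as $s=j\cdot 2^k$ with $j$ odd and $k\ge 1$. Then \[\lambda^*(d,s+1)\ge \frac1e\,(1-2^{-k})\quad\text{and}\quad \lambda^*(d,s-1)\ge\frac1e\,(1-2^{-k}).\]
   Context: For integers $n\ge d\ge 1$, a $d$-flat in $\mathbb{F}_2^n$ is a set $x_0+U$ with $x_0\in\mathbb{F}_2^n$ and $U$ a $d$-dimensional linear subspace of $\mathbb{F}_2^n$. For $A\subseteq\mathbb{F}_2^n$ and an integer $0\le s\le 2^d$, $\lambda^*(n,d,s,A)$ denotes the fraction of $d$-flats $Q$ in $\mathbb{F}_2^n$ with $|Q\cap A|=s$. Let $\lambda^*(n,d,s)=\max_{A\subseteq\mathbb{F}_2^n}\lambda^*(n,d,s,A)$; this is non-increasing in $n$, and $\lambda^*(d,s)=\lim_{n\to\infty}\lambda^*(n,d,s)$. *)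

theory Defs
  imports Complex_Main
begin

text \<open>Vectors of F_2^n are represented by their supports: subsets of {..<n}.
  Vector addition is symmetric difference; the zero vector is the empty set.\<close>

definition F2vec :: "nat \<Rightarrow> nat set set" where
  "F2vec n = Pow {..<n}"

definition vadd :: "nat set \<Rightarrow> nat set \<Rightarrow> nat set" where
  "vadd x y = (x - y) \<union> (y - x)"

definition vsum :: "nat set set \<Rightarrow> nat set" where
  "vsum S = {i. odd (card {v \<in> S. i \<in> v})}"

definition is_subspace_dim :: "nat \<Rightarrow> nat \<Rightarrow> nat set set \<Rightarrow> bool" where
  "is_subspace_dim n d U \<longleftrightarrow>
     (\<exists>B. B \<subseteq> F2vec n \<and> finite B \<and> card B = d \<and>
          (\<forall>S \<subseteq> B. S \<noteq> {} \<longrightarrow> vsum S \<noteq> {}) \<and>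
          U = vsum ` Pow B)"

definition flats :: "nat \<Rightarrow> nat \<Rightarrow> nat set set set" where
  "flats n d = {vadd x0 ` U | x0 U. x0 \<in> F2vec n \<and> is_subspace_dim n d U}"

definition lam_A :: "nat \<Rightarrow> nat \<Rightarrow> nat \<Rightarrow> nat set set \<Rightarrow> real" where
  "lam_A n d s A = real (card {Q \<in> flats n d. card (Q \<inter> A) = s}) / real (card (flats n d))"

definition lam_n :: "nat \<Rightarrow> nat \<Rightarrow> nat \<Rightarrow> real" where
  "lam_n n d s = Max ((\<lambda>A. lam_A n d s A) ` Pow (F2vec n))"

definition lam_star :: "nat \<Rightarrow> nat \<Rightarrow> real" where
  "lam_star d s = lim (\<lambda>n. lam_n n d s)"

end

theory Submission
  imports Defs "HOL-Combinatorics.Transposition"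
begin

text \<open>
  \<open>\<lambda>(n, d, s)\<close> is non-increasing in \<open>n \<ge> d\<close>: every \<open>d\<close>-flat of \<open>F\<^sub>2\<^sup>n\<^sup>+\<^sup>1\<close> lies in the same
  number \<open>2\<^sup>n\<^sup>+\<^sup>1\<^sup>-\<^sup>d - 1\<close> of affine hyperplanes, each a copy of \<open>F\<^sub>2\<^sup>n\<close>, so averaging over
  hyperplanes bounds \<open>\<lambda>(n + 1, d, s, A)\<close> by \<open>\<lambda>(n, d, s)\<close>. Hence \<open>\<lambda>\<^sup>*(d, s)\<close> is the limit of a
  decreasing sequence, and it suffices to bound \<open>\<lambda>(n, d, s \<plusminus> 1)\<close> for every \<open>n \<ge> d\<close>.

  Write \<open>s = j 2\<^sup>k\<close> and \<open>m = d - k\<close>, and let \<open>A\<^sub>0\<close> consist of the points whose first \<open>m\<close>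
  coordinates form one of \<open>j\<close> fixed patterns. A \<open>d\<close>-flat projecting onto the first \<open>m\<close>
  coordinates meets \<open>A\<^sub>0\<close> in exactly \<open>j 2\<^sup>d\<^sup>-\<^sup>m = s\<close> points, and a character-sum count shows
  that all but a fraction \<open>(2\<^sup>m - 1)/2\<^sup>d < 2\<^sup>-\<^sup>k\<close> of the flats project onto. Finally toggle a
  random set \<open>R\<close> outside \<open>A\<^sub>0\<close> (for \<open>s + 1\<close>) or inside \<open>A\<^sub>0\<close> (for \<open>s - 1\<close>), each point
  independently with probability \<open>1/M\<close> where \<open>M\<close> is the number of candidate points in a flat:
  such a flat is hit exactly once with probability \<open>(1 - 1/M)\<^sup>M\<^sup>-\<^sup>1 \<ge> 1/e\<close>.
\<close>

section \<open>Vectors, spans and flats of \<open>F\<^sub>2\<^sup>n\<close>\<close>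

lemma mem_vadd: "i \<in> vadd x y \<longleftrightarrow> (i \<in> x) \<noteq> (i \<in> y)"
  unfolding vadd_def by auto

lemma vadd_simps [simp]:
  "vadd x {} = x" "vadd {} x = x" "vadd x x = {}"
  "vadd x (vadd x y) = y" "vadd (vadd y x) x = y"
  "vadd x y = vadd x z \<longleftrightarrow> y = z"
  "vadd x y = {} \<longleftrightarrow> x = y"
  unfolding vadd_def by auto

lemma inj_on_vadd: "inj_on (vadd x) A"
  by (rule inj_onI) simp

lemma vadd_in_F2vec: "x \<in> F2vec n \<Longrightarrow> y \<in> F2vec n \<Longrightarrow> vadd x y \<in> F2vec n"
  unfolding vadd_def F2vec_def by auto

lemma finite_F2vec [simp]: "finite (F2vec n)"
  unfolding F2vec_def by simp

lemma card_F2vec: "card (F2vec n) = 2 ^ n"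
  unfolding F2vec_def by (simp add: card_Pow)

lemma even_card_sym_diff:
  assumes "finite A" "finite B"
  shows "even (card (sym_diff A B)) \<longleftrightarrow> (even (card A) \<longleftrightarrow> even (card B))"
proof -
  have "card (sym_diff A B) = card (A - B) + card (B - A)"
    using assms by (intro card_Un_disjoint) auto
  moreover have "card A = card (A - B) + card (A \<inter> B)" "card B = card (B - A) + card (A \<inter> B)"
    using assms by (simp_all add: card_Diff_subset_Int card_mono Int_commute)
  ultimately show ?thesis by presburger
qed

lemma vsum_sym_diff:
  assumes "finite S" "finite T"
  shows "vsum (sym_diff S T) = vadd (vsum S) (vsum T)"
proof (rule set_eqI)
  fix i
  have "{v \<in> sym_diff S T. i \<in> v} = sym_diff {v \<in> S. i \<in> v} {v \<in> T. i \<in> v}"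
    by auto
  then show "i \<in> vsum (sym_diff S T) \<longleftrightarrow> i \<in> vadd (vsum S) (vsum T)"
    unfolding vsum_def mem_vadd using even_card_sym_diff[of "{v \<in> S. i \<in> v}" "{v \<in> T. i \<in> v}"] assms
    by auto
qed

lemma vsum_empty [simp]: "vsum {} = {}"
  unfolding vsum_def by simp

lemma vsum_singleton [simp]: "vsum {x} = x"
proof -
  have "{v \<in> {x}. i \<in> v} = (if i \<in> x then {x} else {})" for i
    by auto
  then show ?thesis
    unfolding vsum_def by auto
qed

lemma vsum_insert:
  assumes "finite S" "x \<notin> S"
  shows "vsum (insert x S) = vadd x (vsum S)"
proof -
  have "insert x S = sym_diff {x} S"
    using assms(2) by auto
  then show ?thesis
    using vsum_sym_diff[of "{x}" S] assms(1) by (metis finite.emptyI finite.insertI vsum_singleton)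
qed

lemma vsum_in_F2vec:
  assumes "S \<subseteq> F2vec n"
  shows "vsum S \<in> F2vec n"
proof -
  have "i < n" if "i \<in> vsum S" for i
  proof -
    from that have "{v \<in> S. i \<in> v} \<noteq> {}"
      unfolding vsum_def by (metis (no_types, lifting) card.empty even_zero mem_Collect_eq)
    then show ?thesis
      using assms unfolding F2vec_def by auto
  qed
  then show ?thesis
    unfolding F2vec_def by auto
qed

lemma even_card_inter_vadd:
  assumes "finite w"
  shows "even (card (w \<inter> vadd x y)) \<longleftrightarrow> (even (card (w \<inter> x)) \<longleftrightarrow> even (card (w \<inter> y)))"
proof -
  have "w \<inter> vadd x y = sym_diff (w \<inter> x) (w \<inter> y)"
    unfolding vadd_def by blast
  then show ?thesis
    using even_card_sym_diff[of "w \<inter> x" "w \<inter> y"] assms by simp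
qed

definition f2_span :: "nat set set \<Rightarrow> nat set set" where
  "f2_span B = vsum ` Pow B"

definition f2_indep :: "nat set set \<Rightarrow> bool" where
  "f2_indep B \<longleftrightarrow> (\<forall>S \<subseteq> B. S \<noteq> {} \<longrightarrow> vsum S \<noteq> {})"

definition f2_subgroup :: "nat set set \<Rightarrow> bool" where
  "f2_subgroup U \<longleftrightarrow> {} \<in> U \<and> (\<forall>x\<in>U. \<forall>y\<in>U. vadd x y \<in> U)"

lemma is_subspace_dim_iff:
  "is_subspace_dim n d U \<longleftrightarrow>
     (\<exists>B. B \<subseteq> F2vec n \<and> finite B \<and> card B = d \<and> f2_indep B \<and> U = f2_span B)"
  unfolding is_subspace_dim_def f2_indep_def f2_span_def ..

lemma f2_span_subset_F2vec: "B \<subseteq> F2vec n \<Longrightarrow> f2_span B \<subseteq> F2vec n"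
  unfolding f2_span_def using vsum_in_F2vec by blast

lemma f2_subgroup_f2_span:
  assumes "finite B"
  shows "f2_subgroup (f2_span B)"
  unfolding f2_subgroup_def f2_span_def
proof (intro conjI ballI)
  show "{} \<in> vsum ` Pow B"
    by (metis Pow_bottom image_eqI vsum_empty)
next
  fix x y assume "x \<in> vsum ` Pow B" "y \<in> vsum ` Pow B"
  then obtain S T where "S \<subseteq> B" "T \<subseteq> B" "x = vsum S" "y = vsum T"
    by auto
  moreover from this have "vadd x y = vsum (sym_diff S T)"
    using assms by (simp add: vsum_sym_diff finite_subset)
  ultimately show "vadd x y \<in> vsum ` Pow B"
    by blast
qed

lemma card_f2_span:
  assumes "finite B" "f2_indep B"
  shows "card (f2_span B) = 2 ^ card B"
proof -
  have "inj_on vsum (Pow B)"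
  proof (rule inj_onI)
    fix S T assume "S \<in> Pow B" "T \<in> Pow B" "vsum S = vsum T"
    then have "vsum (sym_diff S T) = {}" "sym_diff S T \<subseteq> B"
      using assms(1) by (auto simp: vsum_sym_diff finite_subset)
    then show "S = T"
      using assms(2) unfolding f2_indep_def by blast
  qed
  then show ?thesis
    unfolding f2_span_def using assms(1) by (simp add: card_image card_Pow)
qed

lemma vsum_in_f2_subgroup:
  assumes "f2_subgroup U" "finite S" "S \<subseteq> U"
  shows "vsum S \<in> U"
  using assms(2,3)
proof (induction S rule: finite_induct)
  case (insert x S)
  then show ?case
    using assms(1) unfolding f2_subgroup_def by (simp add: vsum_insert)
qed (use assms(1) f2_subgroup_def in simp)

lemma f2_indep_insert:
  assumes "finite B" "f2_indep B" "u \<notin> f2_span B"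
  shows "f2_indep (insert u B)"
  unfolding f2_indep_def
proof (intro allI impI)
  fix S assume S: "S \<subseteq> insert u B" "S \<noteq> {}"
  show "vsum S \<noteq> {}"
  proof (cases "u \<in> S")
    case True
    have "S - {u} \<subseteq> B"
      using S(1) by auto
    then have "vsum (S - {u}) \<noteq> u"
      using assms(3) unfolding f2_span_def by blast
    moreover have "vsum S = vadd u (vsum (S - {u}))"
      using vsum_insert[of "S - {u}" u] True finite_subset[OF S(1)] assms(1)
      by (simp add: insert_absorb)
    ultimately show ?thesis
      by auto
  next
    case False
    then show ?thesis
      using S assms(2) unfolding f2_indep_def by blast
  qed
qed

lemma f2_subgroup_has_basis:
  assumes "finite U" "f2_subgroup U"
  obtains B where "B \<subseteq> U" "finite B" "f2_indep B" "f2_span B = U"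
proof -
  let ?I = "{B. B \<subseteq> U \<and> f2_indep B}"
  have "finite ?I"
    using assms(1) by simp
  moreover have "{} \<in> ?I"
    unfolding f2_indep_def by simp
  ultimately have "Max (card ` ?I) \<in> card ` ?I"
    by (intro Max_in) auto
  then obtain B where B: "B \<in> ?I" and B_max: "card B = Max (card ` ?I)"
    by auto
  have max: "card B' \<le> card B" if "B' \<in> ?I" for B'
    unfolding B_max using \<open>finite ?I\<close> that by (intro Max_ge) auto
  have fin: "finite B"
    using B assms(1) finite_subset by blast
  have "U \<subseteq> f2_span B"
  proof
    fix u assume "u \<in> U"
    show "u \<in> f2_span B"
    proof (rule ccontr)
      assume u: "u \<notin> f2_span B"
      then have "u \<notin> B"
        unfolding f2_span_def by (metis PowI empty_subsetI image_eqI insert_subset vsum_singleton)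
      then show False
        using max[of "insert u B"] B fin u \<open>u \<in> U\<close> f2_indep_insert by auto
    qed
  qed
  moreover have "f2_span B \<subseteq> U"
    unfolding f2_span_def using B assms(2) fin
    by (auto intro!: vsum_in_f2_subgroup dest: finite_subset)
  ultimately show ?thesis
    using that B fin by blast
qed

definition affine_closed :: "nat set set \<Rightarrow> bool" where
  "affine_closed Q \<longleftrightarrow> (\<forall>x\<in>Q. \<forall>y\<in>Q. \<forall>z\<in>Q. vadd x (vadd y z) \<in> Q)"

lemma affine_closed_translate_f2_subgroup:
  assumes "f2_subgroup U"
  shows "affine_closed (vadd x0 ` U)"
  unfolding affine_closed_def
proof (intro ballI)
  fix a b c assume "a \<in> vadd x0 ` U" "b \<in> vadd x0 ` U" "c \<in> vadd x0 ` U"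
  then obtain x y z where "x \<in> U" "y \<in> U" "z \<in> U" "a = vadd x0 x" "b = vadd x0 y" "c = vadd x0 z"
    by blast
  moreover from this have "vadd a (vadd b c) = vadd x0 (vadd x (vadd y z))"
    by (auto simp: set_eq_iff mem_vadd)
  ultimately show "vadd a (vadd b c) \<in> vadd x0 ` U"
    using assms unfolding f2_subgroup_def by blast
qed

lemma f2_subgroup_translate_affine_closed:
  assumes "affine_closed Q" "x0 \<in> Q"
  shows "f2_subgroup (vadd x0 ` Q)"
  unfolding f2_subgroup_def
proof (intro conjI ballI)
  show "{} \<in> vadd x0 ` Q"
    using assms(2) by (metis image_eqI vadd_simps(3))
next
  fix u v assume "u \<in> vadd x0 ` Q" "v \<in> vadd x0 ` Q"
  then obtain a b where "a \<in> Q" "b \<in> Q" "u = vadd x0 a" "v = vadd x0 b"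
    by auto
  moreover from this have "vadd u v = vadd x0 (vadd a (vadd x0 b))"
    by (auto simp: set_eq_iff mem_vadd)
  ultimately show "vadd u v \<in> vadd x0 ` Q"
    using assms unfolding affine_closed_def by blast
qed

lemma flats_iff_basis:
  "Q \<in> flats n d \<longleftrightarrow> (\<exists>x0 B. x0 \<in> F2vec n \<and> B \<subseteq> F2vec n \<and> finite B \<and> card B = d \<and>
      f2_indep B \<and> Q = vadd x0 ` f2_span B)"
proof -
  have "Q \<in> flats n d \<longleftrightarrow> (\<exists>x0 U. x0 \<in> F2vec n \<and> is_subspace_dim n d U \<and> Q = vadd x0 ` U)"
    unfolding flats_def by blast
  then show ?thesis
    unfolding is_subspace_dim_iff by blast
qed

text \<open>Over \<open>F\<^sub>2\<close> closure under \<open>x + y + z\<close> characterises translates of subgroups, so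
  flats can be recognised without choosing a basis.\<close>
theorem flats_iff: "Q \<in> flats n d \<longleftrightarrow> Q \<subseteq> F2vec n \<and> card Q = 2 ^ d \<and> affine_closed Q"
proof
  assume "Q \<in> flats n d"
  then obtain x0 B where x0: "x0 \<in> F2vec n" and B: "B \<subseteq> F2vec n" "finite B" "card B = d" "f2_indep B"
    and Q: "Q = vadd x0 ` f2_span B"
    unfolding flats_iff_basis by blast
  have "Q \<subseteq> F2vec n"
    using Q x0 f2_span_subset_F2vec[OF B(1)] vadd_in_F2vec by auto
  moreover have "card Q = 2 ^ d"
    unfolding Q card_image[OF inj_on_vadd] using card_f2_span B by simp
  moreover have "affine_closed Q"
    unfolding Q by (rule affine_closed_translate_f2_subgroup[OF f2_subgroup_f2_span[OF B(2)]])
  ultimately show "Q \<subseteq> F2vec n \<and> card Q = 2 ^ d \<and> affine_closed Q"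
    by blast
next
  assume Q: "Q \<subseteq> F2vec n \<and> card Q = 2 ^ d \<and> affine_closed Q"
  then have "Q \<noteq> {}"
    by auto
  then obtain x0 where x0: "x0 \<in> Q"
    by blast
  let ?U = "vadd x0 ` Q"
  have fin: "finite ?U"
    using Q finite_subset[OF _ finite_F2vec] by (meson finite_imageI)
  obtain B where B: "B \<subseteq> ?U" "finite B" "f2_indep B" "f2_span B = ?U"
    using f2_subgroup_has_basis[OF fin f2_subgroup_translate_affine_closed] Q x0 by blast
  have "?U \<subseteq> F2vec n"
    using Q x0 vadd_in_F2vec by auto
  then have "B \<subseteq> F2vec n"
    using B(1) by (rule subset_trans[rotated])
  moreover have "card B = d"
    using card_f2_span[OF B(2,3)] B(4) Q card_image[OF inj_on_vadd, of x0 Q] by simp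
  moreover have "Q = vadd x0 ` f2_span B"
    unfolding B(4) by (simp add: image_image)
  moreover have "x0 \<in> F2vec n"
    using Q x0 by blast
  ultimately show "Q \<in> flats n d"
    unfolding flats_iff_basis using B(2,3) by (intro exI[of _ x0] exI[of _ B]) simp
qed

lemma flat_subset_F2vec: "Q \<in> flats n d \<Longrightarrow> Q \<subseteq> F2vec n"
  and card_flat: "Q \<in> flats n d \<Longrightarrow> card Q = 2 ^ d"
  and affine_closed_flat: "Q \<in> flats n d \<Longrightarrow> affine_closed Q"
  by (simp_all add: flats_iff)

lemma finite_flat: "Q \<in> flats n d \<Longrightarrow> finite Q"
  using finite_subset[OF flat_subset_F2vec finite_F2vec] .

lemma flat_nonempty: "Q \<in> flats n d \<Longrightarrow> Q \<noteq> {}"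
  using card_flat by fastforce

lemma finite_flats [simp]: "finite (flats n d)"
  using finite_subset[of "flats n d" "Pow (F2vec n)"] flat_subset_F2vec by auto

lemma flat_dim_le:
  assumes "Q \<in> flats n d"
  shows "d \<le> n"
proof -
  have "(2::nat) ^ d \<le> 2 ^ n"
    using card_mono[OF finite_F2vec flat_subset_F2vec[OF assms]] card_flat[OF assms] card_F2vec
    by simp
  then show ?thesis
    by simp
qed

lemma flats_nonempty:
  assumes "d \<le> n"
  shows "flats n d \<noteq> {}"
proof -
  have "Pow {..<d} \<in> flats n d"
    unfolding flats_iff affine_closed_def F2vec_def using assms
    by (auto simp: card_Pow mem_vadd)
  then show ?thesis
    by blast
qed

section \<open>Characters\<close>

definition chi :: "nat set \<Rightarrow> nat set \<Rightarrow> real" where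
  "chi w x = (-1) ^ card (w \<inter> x)"

lemma chi_vadd:
  assumes "finite w"
  shows "chi w (vadd x y) = chi w x * chi w y"
  unfolding chi_def minus_one_power_iff using even_card_inter_vadd[OF assms] by auto

lemma chi_empty [simp]: "chi {} x = 1"
  unfolding chi_def by simp

lemma chi_square [simp]: "chi w x * chi w x = 1"
  unfolding chi_def by (simp add: power_mult_distrib[symmetric])

lemma chi_cases: "chi w x = 1 \<or> chi w x = -1"
  unfolding chi_def minus_one_power_iff by simp

lemma chi_eq_iff: "chi w x = chi w y \<longleftrightarrow> (odd (card (w \<inter> x)) \<longleftrightarrow> odd (card (w \<inter> y)))"
  unfolding chi_def minus_one_power_iff by auto

lemma sum_chi_Pow:
  assumes "finite I"
  shows "(\<Sum>w\<in>Pow I. chi w u) = (if I \<inter> u = {} then 2 ^ card I else 0)"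
proof -
  define f :: "nat \<Rightarrow> real" where "f i = (if i \<in> u then -1 else 1)" for i
  have "chi w u = (\<Prod>i\<in>w. f i)" if "w \<in> Pow I" for w
    using finite_subset[OF _ assms] that
    unfolding chi_def f_def by (simp add: prod.inter_restrict[symmetric])
  then have "(\<Sum>w\<in>Pow I. chi w u) = (\<Sum>w\<in>Pow I. (\<Prod>i\<in>w. f i) * (\<Prod>i\<in>I - w. 1))"
    by simp
  also have "\<dots> = (\<Prod>i\<in>I. f i + 1)"
    by (rule prod_add[OF assms, symmetric])
  also have "\<dots> = (if I \<inter> u = {} then 2 ^ card I else 0)"
  proof (cases "I \<inter> u = {}")
    case True
    then have "(\<Prod>i\<in>I. f i + 1) = (\<Prod>i\<in>I. 2)"
      unfolding f_def by (intro prod.cong) auto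
    then show ?thesis
      using True by simp
  next
    case False
    then show ?thesis
      using assms by (auto simp: f_def prod_zero_iff)
  qed
  finally show ?thesis .
qed

definition chi_const_on :: "nat set \<Rightarrow> nat set set \<Rightarrow> bool" where
  "chi_const_on w Q \<longleftrightarrow> (\<forall>x\<in>Q. \<forall>y\<in>Q. chi w x = chi w y)"

text \<open>If \<open>chi w\<close> takes both signs on an affine set, say at \<open>x\<close> and \<open>y\<close>, then
  \<open>z \<mapsto> x + y + z\<close> is an involution of the set that flips the sign of \<open>chi w\<close>.\<close>
lemma sum_chi_eq_0:
  assumes "finite w" "affine_closed Q" "\<not> chi_const_on w Q"
  shows "(\<Sum>z\<in>Q. chi w z) = 0"
proof -
  obtain x y where xy: "x \<in> Q" "y \<in> Q" "chi w x \<noteq> chi w y"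
    using assms(3) unfolding chi_const_on_def by blast
  then have flip: "chi w x * chi w y = -1"
    using chi_cases[of w x] chi_cases[of w y] by auto
  let ?\<tau> = "\<lambda>z. vadd x (vadd y z)"
  have "?\<tau> (?\<tau> z) = z" for z
    by (auto simp: set_eq_iff mem_vadd)
  moreover have "?\<tau> z \<in> Q" if "z \<in> Q" for z
    using xy that assms(2) unfolding affine_closed_def by blast
  ultimately have "(\<Sum>z\<in>Q. chi w z) = (\<Sum>z\<in>Q. chi w (?\<tau> z))"
    by (intro sum.reindex_bij_witness[of _ ?\<tau> ?\<tau>]) auto
  also have "\<dots> = - (\<Sum>z\<in>Q. chi w z)"
    by (simp add: chi_vadd[OF assms(1)] flip mult.assoc[symmetric] sum_negf)
  finally show ?thesis
    by simp
qed

lemma sum_square_sum_chi: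
  assumes "finite I" "Q \<subseteq> Pow I"
  shows "(\<Sum>w\<in>Pow I. (\<Sum>x\<in>Q. chi w x) * (\<Sum>x\<in>Q. chi w x)) = real (card Q) * 2 ^ card I"
proof -
  have finw: "finite w" if "w \<in> Pow I" for w
    using that assms(1) finite_subset by blast
  have "(\<Sum>w\<in>Pow I. (\<Sum>x\<in>Q. chi w x) * (\<Sum>x\<in>Q. chi w x))
      = (\<Sum>w\<in>Pow I. \<Sum>x\<in>Q. \<Sum>y\<in>Q. chi w (vadd x y))"
    using chi_vadd finw by (intro sum.cong) (simp_all add: sum_product)
  also have "\<dots> = (\<Sum>x\<in>Q. \<Sum>w\<in>Pow I. \<Sum>y\<in>Q. chi w (vadd x y))"
    by (rule sum.swap)
  also have "\<dots> = (\<Sum>x\<in>Q. \<Sum>y\<in>Q. \<Sum>w\<in>Pow I. chi w (vadd x y))"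
    by (rule sum.cong[OF refl], rule sum.swap)
  also have "\<dots> = (\<Sum>x\<in>Q. \<Sum>y\<in>Q. if x = y then 2 ^ card I else 0)"
  proof (intro sum.cong refl)
    fix x y assume "x \<in> Q" "y \<in> Q"
    then have "I \<inter> vadd x y = {} \<longleftrightarrow> x = y"
      using assms(2) unfolding vadd_def by blast
    then show "(\<Sum>w\<in>Pow I. chi w (vadd x y)) = (if x = y then 2 ^ card I else 0)"
      by (simp add: sum_chi_Pow[OF assms(1)])
  qed
  also have "\<dots> = real (card Q) * 2 ^ card I"
    using finite_subset[OF assms(2)] assms(1) by simp
  finally show ?thesis .
qed

text \<open>Compare both sides of the Parseval identity \<open>sum_square_sum_chi\<close>: the character sums over an
  affine set vanish unless the character is constant on it.\<close>
lemma card_chi_const_on: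
  assumes "finite I" "Q \<subseteq> Pow I" "affine_closed Q" "Q \<noteq> {}"
  shows "card {w \<in> Pow I. chi_const_on w Q} * card Q = 2 ^ card I"
proof -
  have finQ: "finite Q"
    using assms(1,2) finite_subset by blast
  obtain x0 where x0: "x0 \<in> Q"
    using assms(4) by blast
  define S where "S w = (\<Sum>x\<in>Q. chi w x)" for w
  have S_square: "S w * S w = (if chi_const_on w Q then real (card Q) * real (card Q) else 0)"
    if "w \<in> Pow I" for w
  proof (cases "chi_const_on w Q")
    case True
    have "chi w x = chi w x0" if "x \<in> Q" for x
      using True x0 that unfolding chi_const_on_def by blast
    then have "S w = (\<Sum>x\<in>Q. chi w x0)"
      unfolding S_def by (rule sum.cong[OF refl])
    then have "S w * S w = (chi w x0 * chi w x0) * (real (card Q) * real (card Q))"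
      by (simp add: mult_ac)
    then show ?thesis
      using True by simp
  next
    case False
    have "finite w"
      using that assms(1) finite_subset by blast
    then show ?thesis
      unfolding S_def using sum_chi_eq_0[OF _ assms(3) False] False by simp
  qed
  have "real (card {w \<in> Pow I. chi_const_on w Q}) * (real (card Q) * real (card Q))
      = (\<Sum>w\<in>Pow I. if chi_const_on w Q then real (card Q) * real (card Q) else 0)"
    using assms(1) by (simp add: sum.If_cases Int_def)
  also have "\<dots> = (\<Sum>w\<in>Pow I. S w * S w)"
    using S_square by (rule sum.cong[OF refl, symmetric])
  also have "\<dots> = real (card Q) * 2 ^ card I"
    unfolding S_def by (rule sum_square_sum_chi[OF assms(1,2)])
  finally have "real (card {w \<in> Pow I. chi_const_on w Q}) * real (card Q) * real (card Q)
      = 2 ^ card I * real (card Q)"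
    by (simp add: mult.commute mult.left_commute)
  moreover have "real (card Q) \<noteq> 0"
    using x0 finQ by auto
  ultimately have "real (card {w \<in> Pow I. chi_const_on w Q} * card Q) = real (2 ^ card I)"
    by simp
  then show ?thesis
    by (simp only: of_nat_eq_iff)
qed

lemma card_chi_const_on_flat:
  assumes "Q \<in> flats N d"
  shows "card {w \<in> Pow {..<N}. chi_const_on w Q} = 2 ^ (N - d)"
proof -
  have "Q \<subseteq> Pow {..<N}" "card Q = 2 ^ d" "affine_closed Q" "Q \<noteq> {}"
    using assms flat_nonempty[OF assms] by (auto simp: flats_iff F2vec_def)
  then have "card {w \<in> Pow {..<N}. chi_const_on w Q} * 2 ^ d = 2 ^ N"
    using card_chi_const_on[of "{..<N}" Q] by simp
  also have "(2::nat) ^ N = 2 ^ (N - d) * 2 ^ d"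
    using flat_dim_le[OF assms] by (simp add: power_add[symmetric])
  finally show ?thesis
    by simp
qed

text \<open>\<open>Q\<close> lies in no affine hyperplane whose normal is supported in \<open>I\<close>; equivalently, its
  projection to the coordinates in \<open>I\<close> is onto.\<close>
definition coord_generic :: "nat set \<Rightarrow> nat set set \<Rightarrow> bool" where
  "coord_generic I Q \<longleftrightarrow> (\<forall>w \<in> Pow I - {{}}. \<not> chi_const_on w Q)"

text \<open>Expand the indicator of a fiber into characters; by genericity only the trivial character
  has a nonzero sum over \<open>Q\<close>.\<close>
lemma card_fiber_coord_generic:
  assumes "finite I" "finite Q" "affine_closed Q" "coord_generic I Q" "y \<subseteq> I"
  shows "card {x \<in> Q. x \<inter> I = y} * 2 ^ card I = card Q"
proof -
  have finw: "finite w" if "w \<in> Pow I" for w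
    using that assms(1) finite_subset by blast
  have indicator: "(if x \<inter> I = y then 2 ^ card I else 0) = (\<Sum>w\<in>Pow I. chi w x * chi w y)" for x
  proof -
    have "I \<inter> vadd x y = {} \<longleftrightarrow> x \<inter> I = y"
      using assms(5) unfolding vadd_def by blast
    moreover have "(\<Sum>w\<in>Pow I. chi w x * chi w y) = (\<Sum>w\<in>Pow I. chi w (vadd x y))"
      using chi_vadd finw by (intro sum.cong) auto
    ultimately show ?thesis
      by (simp add: sum_chi_Pow[OF assms(1)])
  qed
  have character_sum: "chi w y * (\<Sum>x\<in>Q. chi w x) = (if w = {} then real (card Q) else 0)"
    if "w \<in> Pow I" for w
  proof (cases "w = {}")
    case False
    then have "\<not> chi_const_on w Q"
      using assms(4) that unfolding coord_generic_def by blast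
    then show ?thesis
      using sum_chi_eq_0[OF finw[OF that] assms(3)] False by simp
  qed simp
  have "real (card {x \<in> Q. x \<inter> I = y}) * 2 ^ card I = (\<Sum>x\<in>Q. if x \<inter> I = y then 2 ^ card I else 0)"
    using assms(2) by (simp add: sum.If_cases Int_def)
  also have "\<dots> = (\<Sum>x\<in>Q. \<Sum>w\<in>Pow I. chi w x * chi w y)"
    using indicator by (rule sum.cong[OF refl])
  also have "\<dots> = (\<Sum>w\<in>Pow I. chi w y * (\<Sum>x\<in>Q. chi w x))"
    unfolding sum_distrib_left by (subst sum.swap) (simp add: mult.commute)
  also have "\<dots> = (\<Sum>w\<in>Pow I. if w = {} then real (card Q) else 0)"
    using character_sum by (rule sum.cong[OF refl])
  also have "\<dots> = real (card Q)"
    using assms(1) by simp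
  finally have "real (card {x \<in> Q. x \<inter> I = y} * 2 ^ card I) = real (card Q)"
    by simp
  then show ?thesis
    by (simp only: of_nat_eq_iff)
qed

lemma card_cylinder_coord_generic:
  assumes "finite I" "finite Q" "affine_closed Q" "coord_generic I Q" "S \<subseteq> Pow I"
  shows "card {x \<in> Q. x \<inter> I \<in> S} * 2 ^ card I = card S * card Q"
proof -
  have finS: "finite S"
    using assms(1,5) finite_subset by blast
  have "{x \<in> Q. x \<inter> I \<in> S} = (\<Union>y\<in>S. {x \<in> Q. x \<inter> I = y})"
    by blast
  then have "card {x \<in> Q. x \<inter> I \<in> S} = (\<Sum>y\<in>S. card {x \<in> Q. x \<inter> I = y})"
    using finS assms(2) by (auto intro!: card_UN_disjoint)
  then have "card {x \<in> Q. x \<inter> I \<in> S} * 2 ^ card I = (\<Sum>y\<in>S. card {x \<in> Q. x \<inter> I = y} * 2 ^ card I)"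
    by (simp add: sum_distrib_right)
  also have "\<dots> = (\<Sum>y\<in>S. card Q)"
    using card_fiber_coord_generic[OF assms(1-4)] assms(5) by (intro sum.cong) auto
  finally show ?thesis
    by simp
qed

section \<open>Hyperplane sections\<close>

definition affine_embedding :: "nat \<Rightarrow> nat \<Rightarrow> (nat set \<Rightarrow> nat set) \<Rightarrow> bool" where
  "affine_embedding n N \<phi> \<longleftrightarrow> \<phi> ` F2vec n \<subseteq> F2vec N \<and> inj_on \<phi> (F2vec n) \<and>
     (\<forall>x\<in>F2vec n. \<forall>y\<in>F2vec n. \<forall>z\<in>F2vec n.
        \<phi> (vadd x (vadd y z)) = vadd (\<phi> x) (vadd (\<phi> y) (\<phi> z)))"

lemma affine_embedding_image_flat:
  assumes "affine_embedding n N \<phi>" "Q \<in> flats n d"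
  shows "\<phi> ` Q \<in> flats N d"
proof -
  have Q: "Q \<subseteq> F2vec n" "card Q = 2 ^ d" "affine_closed Q"
    using assms(2) by (simp_all add: flats_iff)
  have \<phi>: "\<phi> ` F2vec n \<subseteq> F2vec N" "inj_on \<phi> (F2vec n)"
    "\<And>x y z. x \<in> F2vec n \<Longrightarrow> y \<in> F2vec n \<Longrightarrow> z \<in> F2vec n \<Longrightarrow>
       \<phi> (vadd x (vadd y z)) = vadd (\<phi> x) (vadd (\<phi> y) (\<phi> z))"
    using assms(1) unfolding affine_embedding_def by blast+
  have "card (\<phi> ` Q) = 2 ^ d"
    using card_image[OF inj_on_subset[OF \<phi>(2) Q(1)]] Q(2) by simp
  moreover have "affine_closed (\<phi> ` Q)"
    unfolding affine_closed_def
  proof (intro ballI)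
    fix a b c assume "a \<in> \<phi> ` Q" "b \<in> \<phi> ` Q" "c \<in> \<phi> ` Q"
    then obtain x y z where xyz: "x \<in> Q" "y \<in> Q" "z \<in> Q" "a = \<phi> x" "b = \<phi> y" "c = \<phi> z"
      by blast
    then have "vadd a (vadd b c) = \<phi> (vadd x (vadd y z))"
      using \<phi>(3) subsetD[OF Q(1)] by simp
    moreover have "vadd x (vadd y z) \<in> Q"
      using Q(3) xyz unfolding affine_closed_def by blast
    ultimately show "vadd a (vadd b c) \<in> \<phi> ` Q"
      by blast
  qed
  moreover have "\<phi> ` Q \<subseteq> F2vec N"
    using Q(1) \<phi>(1) by blast
  ultimately show ?thesis
    unfolding flats_iff by blast
qed

lemma affine_embedding_flat_preimage:
  assumes "affine_embedding n N \<phi>" "Q' \<in> flats N d" "Q' \<subseteq> \<phi> ` F2vec n"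
  shows "\<exists>Q \<in> flats n d. Q' = \<phi> ` Q"
proof
  have \<phi>: "inj_on \<phi> (F2vec n)"
    "\<And>x y z. x \<in> F2vec n \<Longrightarrow> y \<in> F2vec n \<Longrightarrow> z \<in> F2vec n \<Longrightarrow>
       \<phi> (vadd x (vadd y z)) = vadd (\<phi> x) (vadd (\<phi> y) (\<phi> z))"
    using assms(1) unfolding affine_embedding_def by blast+
  let ?Q = "{y \<in> F2vec n. \<phi> y \<in> Q'}"
  show Q': "Q' = \<phi> ` ?Q"
    using assms(3) by blast
  have "inj_on \<phi> ?Q"
    using \<phi>(1) by (rule inj_on_subset) blast
  then have "card ?Q = card Q'"
    by (subst Q') (simp add: card_image)
  then have "card ?Q = 2 ^ d"
    using card_flat[OF assms(2)] by simp
  moreover have "affine_closed ?Q"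
    unfolding affine_closed_def
  proof (intro ballI)
    fix x y z assume xyz: "x \<in> ?Q" "y \<in> ?Q" "z \<in> ?Q"
    then have "\<phi> (vadd x (vadd y z)) \<in> Q'"
      using \<phi>(2) affine_closed_flat[OF assms(2)] unfolding affine_closed_def by simp
    then show "vadd x (vadd y z) \<in> ?Q"
      using xyz by (simp add: vadd_in_F2vec)
  qed
  ultimately show "?Q \<in> flats n d"
    unfolding flats_iff by blast
qed

lemma card_flats_in_image:
  assumes "affine_embedding n N \<phi>"
  shows "card {Q' \<in> flats N d. Q' \<subseteq> \<phi> ` F2vec n \<and> P Q'} = card {Q \<in> flats n d. P (\<phi> ` Q)}"
proof -
  have "{Q' \<in> flats N d. Q' \<subseteq> \<phi> ` F2vec n \<and> P Q'} = image \<phi> ` {Q \<in> flats n d. P (\<phi> ` Q)}"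
  proof (intro equalityI subsetI)
    fix Q' assume Q': "Q' \<in> {Q' \<in> flats N d. Q' \<subseteq> \<phi> ` F2vec n \<and> P Q'}"
    then have "Q' \<in> flats N d" "Q' \<subseteq> \<phi> ` F2vec n"
      by simp_all
    then obtain Q where "Q \<in> flats n d" "Q' = \<phi> ` Q"
      using affine_embedding_flat_preimage[OF assms] by blast
    then show "Q' \<in> image \<phi> ` {Q \<in> flats n d. P (\<phi> ` Q)}"
      using Q' by auto
  next
    fix Q' assume "Q' \<in> image \<phi> ` {Q \<in> flats n d. P (\<phi> ` Q)}"
    then obtain Q where Q: "Q \<in> flats n d" "P (\<phi> ` Q)" "Q' = \<phi> ` Q"
      by auto
    then show "Q' \<in> {Q' \<in> flats N d. Q' \<subseteq> \<phi> ` F2vec n \<and> P Q'}"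
      using affine_embedding_image_flat[OF assms Q(1)] flat_subset_F2vec[OF Q(1)] by auto
  qed
  moreover have "inj_on (image \<phi>) {Q \<in> flats n d. P (\<phi> ` Q)}"
  proof (rule inj_on_subset)
    show "inj_on (image \<phi>) (Pow (F2vec n))"
      using assms unfolding affine_embedding_def by (blast intro: inj_on_image_Pow)
    show "{Q \<in> flats n d. P (\<phi> ` Q)} \<subseteq> Pow (F2vec n)"
      using flat_subset_F2vec by blast
  qed
  ultimately show ?thesis
    by (simp add: card_image)
qed

definition hyperplane :: "nat \<Rightarrow> nat set \<Rightarrow> bool \<Rightarrow> nat set set" where
  "hyperplane N w b = {x \<in> F2vec N. odd (card (w \<inter> x)) = b}"

text \<open>Move coordinate \<open>i\<close> out of the way (to \<open>n\<close>, by a transposition) and use it as a parity bit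
  that forces \<open>\<langle>w, x\<rangle> = b\<close>.\<close>
definition hyperplane_embedding :: "nat \<Rightarrow> nat \<Rightarrow> nat set \<Rightarrow> bool \<Rightarrow> nat set \<Rightarrow> nat set" where
  "hyperplane_embedding n i w b y =
     Transposition.transpose i n ` y \<union>
     (if odd (card (w \<inter> Transposition.transpose i n ` y)) \<noteq> b then {i} else {})"

lemma transpose_image_notin:
  assumes "y \<in> F2vec n"
  shows "i \<notin> Transposition.transpose i n ` y"
  using assms unfolding F2vec_def by (auto simp: transpose_def split: if_splits)

lemma mem_hyperplane_embedding:
  assumes "y \<in> F2vec n"
  shows "j \<in> hyperplane_embedding n i w b y \<longleftrightarrow>
    (if j = i then odd (card (w \<inter> Transposition.transpose i n ` y)) \<noteq> b
     else j \<in> Transposition.transpose i n ` y)"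
  using transpose_image_notin[OF assms] unfolding hyperplane_embedding_def by auto

lemma parity_hyperplane_embedding:
  assumes "finite w" "i \<in> w" "y \<in> F2vec n"
  shows "odd (card (w \<inter> hyperplane_embedding n i w b y)) = b"
proof -
  let ?z = "Transposition.transpose i n ` y"
  show ?thesis
  proof (cases "odd (card (w \<inter> ?z)) \<noteq> b")
    case True
    then have "w \<inter> hyperplane_embedding n i w b y = insert i (w \<inter> ?z)" "i \<notin> w \<inter> ?z"
      using assms(2) transpose_image_notin[OF assms(3)] unfolding hyperplane_embedding_def by auto
    then show ?thesis
      using True assms(1) by simp
  next
    case False
    then show ?thesis
      unfolding hyperplane_embedding_def by simp
  qed
qed

lemma affine_embedding_hyperplane_embedding:
  assumes "finite w" "i < Suc n"
  shows "affine_embedding n (Suc n) (hyperplane_embedding n i w b)"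
  unfolding affine_embedding_def
proof (intro conjI ballI)
  let ?\<tau> = "Transposition.transpose i n"
  let ?\<phi> = "hyperplane_embedding n i w b"
  show "?\<phi> ` F2vec n \<subseteq> F2vec (Suc n)"
    using assms(2) unfolding hyperplane_embedding_def F2vec_def
    by (auto simp: transpose_def split: if_splits)
  show "inj_on ?\<phi> (F2vec n)"
  proof (rule inj_onI)
    fix x y assume "x \<in> F2vec n" "y \<in> F2vec n" "?\<phi> x = ?\<phi> y"
    moreover have "?\<tau> ` v = ?\<phi> v - {i}" if "v \<in> F2vec n" for v
      using transpose_image_notin[OF that] unfolding hyperplane_embedding_def by auto
    ultimately have "?\<tau> ` x = ?\<tau> ` y"
      by simp
    then show "x = y"
      by (simp add: inj_image_eq_iff)
  qed
  have \<tau>_vadd: "?\<tau> ` vadd x y = vadd (?\<tau> ` x) (?\<tau> ` y)" for x y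
    unfolding vadd_def by (simp add: image_Un image_set_diff)
  fix x y z assume "x \<in> F2vec n" "y \<in> F2vec n" "z \<in> F2vec n"
  then show "?\<phi> (vadd x (vadd y z)) = vadd (?\<phi> x) (vadd (?\<phi> y) (?\<phi> z))"
    by (intro set_eqI)
      (auto simp: mem_hyperplane_embedding mem_vadd \<tau>_vadd even_card_inter_vadd[OF assms(1)] vadd_in_F2vec)
qed

lemma hyperplane_subset_image_hyperplane_embedding:
  assumes "w \<subseteq> {..<Suc n}" "i \<in> w"
  shows "hyperplane (Suc n) w b \<subseteq> hyperplane_embedding n i w b ` F2vec n"
proof
  let ?\<phi> = "hyperplane_embedding n i w b"
  have finw: "finite w"
    using finite_subset[OF assms(1)] by simp
  fix x assume x: "x \<in> hyperplane (Suc n) w b"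
  define \<tau> where "\<tau> = Transposition.transpose i n"
  define y where "y = \<tau> ` (x - {i})"
  have y: "y \<in> F2vec n"
    using x assms unfolding y_def \<tau>_def hyperplane_def F2vec_def
    by (auto simp: transpose_def)
  have "\<tau> ` y = x - {i}"
    unfolding y_def \<tau>_def by (simp add: image_image)
  then have agree: "j \<in> ?\<phi> y \<longleftrightarrow> j \<in> x" if "j \<noteq> i" for j
    using mem_hyperplane_embedding[OF y, of j i w b, folded \<tau>_def] that by simp
  have "vadd x (?\<phi> y) \<subseteq> {i}"
  proof
    fix j assume "j \<in> vadd x (?\<phi> y)"
    then show "j \<in> {i}"
      using agree[of j] by (auto simp: mem_vadd)
  qed
  moreover have "even (card (w \<inter> vadd x (?\<phi> y)))"
    using even_card_inter_vadd[OF finw] parity_hyperplane_embedding[OF finw assms(2) y, where b = b] x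
    unfolding hyperplane_def by auto
  ultimately have "vadd x (?\<phi> y) = {}"
    using assms(2) by (auto dest: subset_singletonD)
  then show "x \<in> ?\<phi> ` F2vec n"
    using y by auto
qed

lemma image_hyperplane_embedding:
  assumes "w \<subseteq> {..<Suc n}" "i \<in> w"
  shows "hyperplane_embedding n i w b ` F2vec n = hyperplane (Suc n) w b"
proof
  let ?\<phi> = "hyperplane_embedding n i w b"
  have finw: "finite w"
    using finite_subset[OF assms(1)] by simp
  have "i < Suc n"
    using assms by auto
  show "?\<phi> ` F2vec n \<subseteq> hyperplane (Suc n) w b"
  proof
    fix x assume "x \<in> ?\<phi> ` F2vec n"
    then obtain y where y: "y \<in> F2vec n" "x = ?\<phi> y"
      by blast
    have "?\<phi> ` F2vec n \<subseteq> F2vec (Suc n)"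
      using affine_embedding_hyperplane_embedding[OF finw \<open>i < Suc n\<close>]
      unfolding affine_embedding_def by blast
    then show "x \<in> hyperplane (Suc n) w b"
      unfolding hyperplane_def using y parity_hyperplane_embedding[OF finw assms(2) y(1), where b = b] by blast
  qed
  show "hyperplane (Suc n) w b \<subseteq> ?\<phi> ` F2vec n"
    by (rule hyperplane_subset_image_hyperplane_embedding[OF assms])
qed

lemma hyperplane_affine_embedding:
  assumes "w \<subseteq> {..<Suc n}" "w \<noteq> {}"
  obtains \<phi> where "affine_embedding n (Suc n) \<phi>" "\<phi> ` F2vec n = hyperplane (Suc n) w b"
proof -
  obtain i where i: "i \<in> w"
    using assms(2) by blast
  have "finite w"
    using finite_subset[OF assms(1)] by simp
  moreover have "i < Suc n"
    using assms(1) i by auto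
  ultimately show ?thesis
    by (rule that[OF affine_embedding_hyperplane_embedding image_hyperplane_embedding[OF assms(1) i]])
qed

lemma chi_const_on_iff_hyperplane:
  assumes "Q \<subseteq> F2vec N" "Q \<noteq> {}"
  shows "chi_const_on w Q \<longleftrightarrow> Q \<subseteq> hyperplane N w True \<or> Q \<subseteq> hyperplane N w False"
proof
  assume const: "chi_const_on w Q"
  obtain x0 where x0: "x0 \<in> Q"
    using assms(2) by blast
  have "Q \<subseteq> hyperplane N w (odd (card (w \<inter> x0)))"
    using const x0 assms(1) unfolding chi_const_on_def chi_eq_iff hyperplane_def by blast
  then show "Q \<subseteq> hyperplane N w True \<or> Q \<subseteq> hyperplane N w False"
    by (cases "odd (card (w \<inter> x0))") auto
next
  assume "Q \<subseteq> hyperplane N w True \<or> Q \<subseteq> hyperplane N w False"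
  then show "chi_const_on w Q"
    unfolding chi_const_on_def chi_eq_iff hyperplane_def by blast
qed

text \<open>A flat on which \<open>chi w\<close> is constant lies in one of the two cosets of the hyperplane
  \<open>w\<^sup>\<bottom>\<close>, and each coset is a copy of \<open>F\<^sub>2\<^sup>n\<close>.\<close>
lemma card_flats_chi_const_on_split:
  assumes "w \<subseteq> {..<Suc n}" "w \<noteq> {}"
  obtains \<phi>\<^sub>0 \<phi>\<^sub>1 where "affine_embedding n (Suc n) \<phi>\<^sub>0" "affine_embedding n (Suc n) \<phi>\<^sub>1"
    "\<And>P. card {Q \<in> flats (Suc n) d. chi_const_on w Q \<and> P Q}
       = card {Q \<in> flats n d. P (\<phi>\<^sub>0 ` Q)} + card {Q \<in> flats n d. P (\<phi>\<^sub>1 ` Q)}"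
proof -
  obtain \<phi>\<^sub>0 where \<phi>\<^sub>0: "affine_embedding n (Suc n) \<phi>\<^sub>0" "\<phi>\<^sub>0 ` F2vec n = hyperplane (Suc n) w False"
    using hyperplane_affine_embedding[OF assms] by blast
  obtain \<phi>\<^sub>1 where \<phi>\<^sub>1: "affine_embedding n (Suc n) \<phi>\<^sub>1" "\<phi>\<^sub>1 ` F2vec n = hyperplane (Suc n) w True"
    using hyperplane_affine_embedding[OF assms] by blast
  have "card {Q \<in> flats (Suc n) d. chi_const_on w Q \<and> P Q}
      = card {Q \<in> flats n d. P (\<phi>\<^sub>0 ` Q)} + card {Q \<in> flats n d. P (\<phi>\<^sub>1 ` Q)}" for P
  proof -
    let ?H = "\<lambda>b. {Q \<in> flats (Suc n) d. Q \<subseteq> hyperplane (Suc n) w b \<and> P Q}"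
    have "{Q \<in> flats (Suc n) d. chi_const_on w Q \<and> P Q} = ?H False \<union> ?H True"
      using chi_const_on_iff_hyperplane[OF flat_subset_F2vec flat_nonempty] by blast
    moreover have "?H False \<inter> ?H True = {}"
      using flat_nonempty unfolding hyperplane_def by fastforce
    ultimately have "card {Q \<in> flats (Suc n) d. chi_const_on w Q \<and> P Q} = card (?H False) + card (?H True)"
      by (simp add: card_Un_disjoint)
    then show ?thesis
      using card_flats_in_image[OF \<phi>\<^sub>0(1)] card_flats_in_image[OF \<phi>\<^sub>1(1)] \<phi>\<^sub>0(2) \<phi>\<^sub>1(2) by simp
  qed
  then show ?thesis
    using that \<phi>\<^sub>0(1) \<phi>\<^sub>1(1) by blast
qed

lemma sum_card_Collect_swap:
  assumes "finite A" "finite B"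
  shows "(\<Sum>a\<in>A. card {b \<in> B. R a b}) = (\<Sum>b\<in>B. card {a \<in> A. R a b})"
proof -
  have "(\<Sum>a\<in>A. card {b \<in> B. R a b}) = (\<Sum>a\<in>A. \<Sum>b\<in>B. if R a b then 1 else 0)"
    using assms(2) by (simp add: sum.If_cases Int_def)
  also have "\<dots> = (\<Sum>b\<in>B. \<Sum>a\<in>A. if R a b then 1 else 0)"
    by (rule sum.swap)
  also have "\<dots> = (\<Sum>b\<in>B. card {a \<in> A. R a b})"
    using assms(1) by (simp add: sum.If_cases Int_def)
  finally show ?thesis .
qed

text \<open>Double counting of pairs \<open>(w, Q)\<close> with \<open>w \<noteq> 0\<close> and \<open>chi w\<close> constant on \<open>Q\<close>: every
  \<open>d\<close>-flat lies in exactly \<open>2\<^sup>N\<^sup>-\<^sup>d - 1\<close> affine hyperplanes (by \<open>card_chi_const_on_flat\<close>).\<close>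
lemma sum_card_flats_chi_const_on:
  "(\<Sum>w\<in>Pow {..<N} - {{}}. card {Q \<in> flats N d. chi_const_on w Q \<and> P Q})
     = card {Q \<in> flats N d. P Q} * (2 ^ (N - d) - 1)"
proof -
  let ?W = "Pow {..<N} - {{}}"
  have "(\<Sum>w\<in>?W. card {Q \<in> flats N d. chi_const_on w Q \<and> P Q})
      = (\<Sum>w\<in>?W. card {Q \<in> {Q \<in> flats N d. P Q}. chi_const_on w Q})"
    by (intro sum.cong) (auto intro: arg_cong[where f = card])
  also have "\<dots> = (\<Sum>Q\<in>{Q \<in> flats N d. P Q}. card {w \<in> ?W. chi_const_on w Q})"
    by (rule sum_card_Collect_swap) auto
  also have "\<dots> = (\<Sum>Q\<in>{Q \<in> flats N d. P Q}. 2 ^ (N - d) - 1)"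
  proof (rule sum.cong[OF refl])
    fix Q assume "Q \<in> {Q \<in> flats N d. P Q}"
    then have "card {w \<in> Pow {..<N}. chi_const_on w Q} = 2 ^ (N - d)"
      using card_chi_const_on_flat by blast
    moreover have "{w \<in> ?W. chi_const_on w Q} = {w \<in> Pow {..<N}. chi_const_on w Q} - {{}}"
      by blast
    moreover have "{} \<in> {w \<in> Pow {..<N}. chi_const_on w Q}"
      unfolding chi_const_on_def by simp
    ultimately show "card {w \<in> ?W. chi_const_on w Q} = 2 ^ (N - d) - 1"
      by (simp add: card_Diff_singleton)
  qed
  finally show ?thesis
    by simp
qed

lemma card_nonzero_subsets: "card (Pow {..<N} - {{}}) = 2 ^ N - 1"
  by (simp add: card_Pow)

lemma card_flats_chi_const_on:
  assumes "w \<subseteq> {..<Suc n}" "w \<noteq> {}"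
  shows "card {Q \<in> flats (Suc n) d. chi_const_on w Q} = 2 * card (flats n d)"
proof -
  obtain \<phi>\<^sub>0 \<phi>\<^sub>1 where "affine_embedding n (Suc n) \<phi>\<^sub>0" "affine_embedding n (Suc n) \<phi>\<^sub>1"
    and split: "\<And>P. card {Q \<in> flats (Suc n) d. chi_const_on w Q \<and> P Q}
     = card {Q \<in> flats n d. P (\<phi>\<^sub>0 ` Q)} + card {Q \<in> flats n d. P (\<phi>\<^sub>1 ` Q)}"
    by (rule card_flats_chi_const_on_split[where d = d, OF assms]) (rule that)
  from split[of "\<lambda>_. True"] show ?thesis
    by simp
qed

lemma card_flats_Suc:
  "card (flats (Suc n) d) * (2 ^ (Suc n - d) - 1) = (2 ^ Suc n - 1) * (2 * card (flats n d))"
proof -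
  let ?W = "Pow {..<Suc n} - {{}}"
  have "card (flats (Suc n) d) * (2 ^ (Suc n - d) - 1)
      = (\<Sum>w\<in>?W. card {Q \<in> flats (Suc n) d. chi_const_on w Q \<and> True})"
    using sum_card_flats_chi_const_on[of "Suc n" d "\<lambda>_. True"] by simp
  also have "\<dots> = (\<Sum>w\<in>?W. 2 * card (flats n d))"
    using card_flats_chi_const_on by (intro sum.cong) auto
  also have "\<dots> = (2 ^ Suc n - 1) * (2 * card (flats n d))"
    by (simp add: card_nonzero_subsets)
  finally show ?thesis .
qed

text \<open>By \<open>card_flats_Suc\<close>, a fixed nonzero \<open>chi w\<close> is constant on a fraction
  \<open>(2\<^sup>N\<^sup>-\<^sup>d - 1)/(2\<^sup>N - 1) \<le> 2\<^sup>-\<^sup>d\<close> of the \<open>d\<close>-flats of \<open>F\<^sub>2\<^sup>N\<close>.\<close>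
lemma card_flats_chi_const_on_le:
  assumes "w \<subseteq> {..<Suc n}" "w \<noteq> {}"
  shows "card {Q \<in> flats (Suc n) d. chi_const_on w Q} * 2 ^ d \<le> card (flats (Suc n) d)"
proof -
  have c: "card {Q \<in> flats (Suc n) d. chi_const_on w Q} = 2 * card (flats n d)"
    using card_flats_chi_const_on[OF assms] .
  let ?F = "card (flats (Suc n) d)"
  have pos: "(0::nat) < 2 ^ Suc n - 1"
    using one_less_power[of "2::nat" "Suc n"] by linarith
  show ?thesis
  proof (cases "d \<le> Suc n")
    case True
    have "(2 ^ Suc n - 1) * (2 * card (flats n d) * 2 ^ d) = ?F * ((2 ^ (Suc n - d) - 1) * 2 ^ d)"
      using card_flats_Suc[of n d] by (simp add: mult_ac)
    also have "(2 ^ (Suc n - d) - 1) * 2 ^ d = (2::nat) ^ Suc n - 2 ^ d"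
      using True by (simp add: diff_mult_distrib power_add[symmetric])
    also have "?F * \<dots> \<le> ?F * (2 ^ Suc n - 1)"
      by (intro mult_le_mono2 diff_le_mono2) simp
    finally show ?thesis
      unfolding c using pos by (simp add: mult.commute)
  next
    case False
    then have "flats n d = {}"
      using flat_dim_le by fastforce
    then show ?thesis
      unfolding c by simp
  qed
qed

section \<open>Monotonicity in \<open>n\<close>\<close>

lemma lam_A_le_lam_n: "A \<subseteq> F2vec n \<Longrightarrow> lam_A n d s A \<le> lam_n n d s"
  unfolding lam_n_def by (rule Max_ge) auto

lemma card_flats_le_lam_n:
  assumes "A \<subseteq> F2vec n"
  shows "real (card {Q \<in> flats n d. card (Q \<inter> A) = s}) \<le> lam_n n d s * real (card (flats n d))"
proof (cases "flats n d = {}")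
  case False
  then have "real (card (flats n d)) > 0"
    by (simp add: card_gt_0_iff)
  then show ?thesis
    using lam_A_le_lam_n[OF assms, of d s] unfolding lam_A_def by (simp add: divide_le_eq)
qed simp

lemma lam_n_le:
  assumes "flats n d \<noteq> {}"
    and "\<And>A. A \<subseteq> F2vec n \<Longrightarrow> real (card {Q \<in> flats n d. card (Q \<inter> A) = s}) \<le> c * real (card (flats n d))"
  shows "lam_n n d s \<le> c"
proof -
  have "real (card (flats n d)) > 0"
    using assms(1) by (simp add: card_gt_0_iff)
  then have "lam_A n d s A \<le> c" if "A \<subseteq> F2vec n" for A
    using assms(2)[OF that] unfolding lam_A_def by (simp add: divide_le_eq)
  then show ?thesis
    unfolding lam_n_def by (intro Max.boundedI) auto
qed

lemma lam_n_ge: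
  assumes "flats n d \<noteq> {}" "A \<subseteq> F2vec n"
    and "c * real (card (flats n d)) \<le> real (card {Q \<in> flats n d. card (Q \<inter> A) = t})"
  shows "c \<le> lam_n n d t"
proof -
  have "real (card (flats n d)) > 0"
    using assms(1) by (simp add: card_gt_0_iff)
  then have "c \<le> lam_A n d t A"
    using assms(3) unfolding lam_A_def by (simp add: le_divide_eq)
  also have "\<dots> \<le> lam_n n d t"
    using assms(2) by (rule lam_A_le_lam_n)
  finally show ?thesis .
qed

lemma card_image_flats_le_lam_n:
  assumes "affine_embedding n N \<phi>"
  shows "real (card {Q \<in> flats n d. card (\<phi> ` Q \<inter> A) = s}) \<le> lam_n n d s * real (card (flats n d))"
proof -
  let ?A = "{y \<in> F2vec n. \<phi> y \<in> A}"
  have "card (\<phi> ` Q \<inter> A) = card (Q \<inter> ?A)" if "Q \<in> flats n d" for Q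
  proof -
    have Q: "Q \<subseteq> F2vec n"
      using flat_subset_F2vec[OF that] .
    then have "\<phi> ` Q \<inter> A = \<phi> ` (Q \<inter> ?A)"
      by auto
    moreover have "inj_on \<phi> (Q \<inter> ?A)"
      using assms unfolding affine_embedding_def by (auto intro: inj_on_subset)
    ultimately show ?thesis
      by (simp add: card_image)
  qed
  then have "{Q \<in> flats n d. card (\<phi> ` Q \<inter> A) = s} = {Q \<in> flats n d. card (Q \<inter> ?A) = s}"
    by auto
  then show ?thesis
    using card_flats_le_lam_n[of ?A n d s] by simp
qed

lemma card_flats_chi_const_on_le_lam_n:
  assumes "w \<subseteq> {..<Suc n}" "w \<noteq> {}"
  shows "real (card {Q \<in> flats (Suc n) d. chi_const_on w Q \<and> card (Q \<inter> A) = s})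
    \<le> 2 * (lam_n n d s * real (card (flats n d)))"
proof -
  obtain \<phi>\<^sub>0 \<phi>\<^sub>1 where \<phi>: "affine_embedding n (Suc n) \<phi>\<^sub>0" "affine_embedding n (Suc n) \<phi>\<^sub>1"
    and split: "\<And>P. card {Q \<in> flats (Suc n) d. chi_const_on w Q \<and> P Q}
     = card {Q \<in> flats n d. P (\<phi>\<^sub>0 ` Q)} + card {Q \<in> flats n d. P (\<phi>\<^sub>1 ` Q)}"
    by (rule card_flats_chi_const_on_split[where d = d, OF assms]) (rule that)
  show ?thesis
    using split[of "\<lambda>Q. card (Q \<inter> A) = s"]
      card_image_flats_le_lam_n[OF \<phi>(1), of d A s] card_image_flats_le_lam_n[OF \<phi>(2), of d A s]
    by simp
qed

text \<open>Average over the affine hyperplanes containing a flat: each hyperplane coset is a copy of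
  \<open>F\<^sub>2\<^sup>n\<close>, and every \<open>d\<close>-flat lies in the same number of them.\<close>
theorem lam_n_Suc_le:
  assumes "d \<le> n"
  shows "lam_n (Suc n) d s \<le> lam_n n d s"
proof (rule lam_n_le)
  show "flats (Suc n) d \<noteq> {}"
    using assms by (simp add: flats_nonempty)
next
  fix A assume "A \<subseteq> F2vec (Suc n)"
  let ?W = "Pow {..<Suc n} - {{}}"
  let ?G = "{Q \<in> flats (Suc n) d. card (Q \<inter> A) = s}"
  let ?lam = "lam_n n d s"
  let ?K = "(2::nat) ^ (Suc n - d) - 1"
  have "card ?G * ?K = (\<Sum>w\<in>?W. card {Q \<in> flats (Suc n) d. chi_const_on w Q \<and> card (Q \<inter> A) = s})"
    using sum_card_flats_chi_const_on[of "Suc n" d "\<lambda>Q. card (Q \<inter> A) = s"] by simp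
  then have "real (card ?G) * real ?K
      = (\<Sum>w\<in>?W. real (card {Q \<in> flats (Suc n) d. chi_const_on w Q \<and> card (Q \<inter> A) = s}))"
    by (simp only: of_nat_mult[symmetric] of_nat_sum[symmetric])
  also have "\<dots> \<le> (\<Sum>w\<in>?W. 2 * (?lam * real (card (flats n d))))"
    using card_flats_chi_const_on_le_lam_n by (intro sum_mono) auto
  also have "\<dots> = ?lam * real ((2 ^ Suc n - 1) * (2 * card (flats n d)))"
    by (simp add: card_nonzero_subsets mult_ac)
  also have "\<dots> = (?lam * real (card (flats (Suc n) d))) * real ?K"
    by (simp only: card_flats_Suc[symmetric] of_nat_mult mult.assoc)
  finally have "real (card ?G) * real ?K \<le> (?lam * real (card (flats (Suc n) d))) * real ?K" .
  moreover have "real ?K > 0"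
    using assms one_less_power[of "2::nat" "Suc n - d"] by simp
  ultimately show "real (card ?G) \<le> ?lam * real (card (flats (Suc n) d))"
    by (rule mult_right_le_imp_le)
qed

section \<open>Random subsets\<close>

definition subset_weight :: "real \<Rightarrow> 'a set \<Rightarrow> 'a set \<Rightarrow> real" where
  "subset_weight p C R = p ^ card R * (1 - p) ^ card (C - R)"

lemma sum_subset_weight:
  assumes "finite C"
  shows "(\<Sum>R\<in>Pow C. subset_weight p C R) = 1"
  using prod_add[OF assms, of "\<lambda>_. p" "\<lambda>_. 1 - p"] by (simp add: subset_weight_def)

lemma subset_weight_Un:
  assumes "finite C" "T \<subseteq> C" "R\<^sub>1 \<subseteq> T" "R\<^sub>2 \<subseteq> C - T"
  shows "subset_weight p C (R\<^sub>1 \<union> R\<^sub>2) = subset_weight p T R\<^sub>1 * subset_weight p (C - T) R\<^sub>2"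
proof -
  have finT: "finite T"
    using finite_subset[OF assms(2,1)] .
  have fin: "finite R\<^sub>1" "finite R\<^sub>2" "finite (T - R\<^sub>1)" "finite (C - T - R\<^sub>2)"
    using finite_subset[OF assms(3) finT] finite_subset[OF assms(4)] finT assms(1) by simp_all
  have "card (R\<^sub>1 \<union> R\<^sub>2) = card R\<^sub>1 + card R\<^sub>2"
    using assms(3,4) fin by (intro card_Un_disjoint) auto
  moreover have "C - (R\<^sub>1 \<union> R\<^sub>2) = (T - R\<^sub>1) \<union> (C - T - R\<^sub>2)"
    using assms(2,3,4) by blast
  moreover have "card ((T - R\<^sub>1) \<union> (C - T - R\<^sub>2)) = card (T - R\<^sub>1) + card (C - T - R\<^sub>2)"
    using fin by (intro card_Un_disjoint) auto
  ultimately show ?thesis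
    unfolding subset_weight_def by (simp add: power_add)
qed

text \<open>Under the product weight, \<open>R \<inter> T\<close> is distributed like a random subset of \<open>T\<close>.\<close>
lemma sum_subset_weight_restrict:
  assumes "finite C" "T \<subseteq> C"
  shows "(\<Sum>R\<in>Pow C. subset_weight p C R * f (R \<inter> T)) = (\<Sum>R\<in>Pow T. subset_weight p T R * f R)"
proof -
  have "(\<Sum>R\<in>Pow C. subset_weight p C R * f (R \<inter> T))
      = (\<Sum>(R\<^sub>1, R\<^sub>2)\<in>Pow T \<times> Pow (C - T). subset_weight p C (R\<^sub>1 \<union> R\<^sub>2) * f ((R\<^sub>1 \<union> R\<^sub>2) \<inter> T))"
    by (rule sum.reindex_bij_witness[of _ "\<lambda>(R\<^sub>1, R\<^sub>2). R\<^sub>1 \<union> R\<^sub>2" "\<lambda>R. (R \<inter> T, R - T)"])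
      (use assms(2) in \<open>auto simp: Int_Diff_Un\<close>)
  also have "\<dots> = (\<Sum>(R\<^sub>1, R\<^sub>2)\<in>Pow T \<times> Pow (C - T).
      subset_weight p T R\<^sub>1 * f R\<^sub>1 * subset_weight p (C - T) R\<^sub>2)"
  proof -
    have "(R\<^sub>1 \<union> R\<^sub>2) \<inter> T = R\<^sub>1" if "R\<^sub>1 \<subseteq> T" "R\<^sub>2 \<subseteq> C - T" for R\<^sub>1 R\<^sub>2
      using that by blast
    then show ?thesis
      using subset_weight_Un[OF assms] by (intro sum.cong refl) auto
  qed
  also have "\<dots> = (\<Sum>R\<^sub>1\<in>Pow T. \<Sum>R\<^sub>2\<in>Pow (C - T).
      subset_weight p T R\<^sub>1 * f R\<^sub>1 * subset_weight p (C - T) R\<^sub>2)"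
    by (rule sum.cartesian_product[symmetric])
  also have "\<dots> = (\<Sum>R\<^sub>1\<in>Pow T. subset_weight p T R\<^sub>1 * f R\<^sub>1)"
    using assms(1) by (simp add: sum_distrib_left[symmetric] sum_subset_weight)
  finally show ?thesis .
qed

lemma sum_subset_weight_card_eq_1:
  assumes "finite T"
  shows "(\<Sum>R\<in>Pow T. subset_weight p T R * (if card R = 1 then 1 else 0))
    = real (card T) * p * (1 - p) ^ (card T - 1)"
proof -
  have singletons: "{R \<in> Pow T. card R = 1} = (\<lambda>x. {x}) ` T"
    by (auto simp: card_Suc_eq)
  have "(\<Sum>R\<in>Pow T. subset_weight p T R * (if card R = 1 then 1 else 0))
      = (\<Sum>R\<in>Pow T. if card R = 1 then subset_weight p T R else 0)"
    by (intro sum.cong) auto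
  also have "\<dots> = (\<Sum>R\<in>{R \<in> Pow T. card R = 1}. subset_weight p T R)"
    by (rule sum.inter_filter[symmetric]) (simp add: assms)
  also have "\<dots> = (\<Sum>R\<in>(\<lambda>x. {x}) ` T. subset_weight p T R)"
    unfolding singletons ..
  also have "\<dots> = (\<Sum>x\<in>T. subset_weight p T {x})"
    by (simp add: sum.reindex inj_on_def)
  also have "\<dots> = (\<Sum>x\<in>T. p * (1 - p) ^ (card T - 1))"
    using assms by (intro sum.cong) (simp_all add: subset_weight_def)
  finally show ?thesis
    by simp
qed

lemma exists_ge_weighted_average:
  fixes h w :: "'a \<Rightarrow> real"
  assumes "finite I" "I \<noteq> {}" "\<And>i. i \<in> I \<Longrightarrow> 0 \<le> w i" "sum w I = 1"
  obtains i where "i \<in> I" "(\<Sum>j\<in>I. w j * h j) \<le> h i"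
proof -
  have "Max (h ` I) \<in> h ` I"
    using assms(1,2) by (intro Max_in) auto
  then obtain i where i: "i \<in> I" "Max (h ` I) = h i"
    by blast
  have "h j \<le> h i" if "j \<in> I" for j
    using Max_ge[of "h ` I" "h j"] assms(1) that i(2) by simp
  then have "(\<Sum>j\<in>I. w j * h j) \<le> (\<Sum>j\<in>I. w j * h i)"
    using assms(3) by (intro sum_mono mult_left_mono) auto
  also have "\<dots> = h i"
    using assms(4) by (simp add: sum_distrib_right[symmetric])
  finally show ?thesis
    using that i(1) by blast
qed

text \<open>Probabilistic method: include each point of \<open>C\<close> independently with probability \<open>p\<close>;
  each \<open>T Q\<close> is then met exactly once with probability \<open>M p (1 - p)\<^sup>M\<^sup>-\<^sup>1\<close>.\<close>
lemma exists_subset_meeting_once: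
  assumes "finite C" "finite G" "\<And>Q. Q \<in> G \<Longrightarrow> T Q \<subseteq> C" "\<And>Q. Q \<in> G \<Longrightarrow> card (T Q) = M"
    and "0 \<le> p" "p \<le> 1"
  obtains R where "R \<subseteq> C"
    "real (card G) * (real M * p * (1 - p) ^ (M - 1)) \<le> real (card {Q \<in> G. card (R \<inter> T Q) = 1})"
proof -
  define h where "h R = real (card {Q \<in> G. card (R \<inter> T Q) = 1})" for R
  have "(\<Sum>R\<in>Pow C. subset_weight p C R * h R)
      = (\<Sum>R\<in>Pow C. \<Sum>Q\<in>G. subset_weight p C R * (if card (R \<inter> T Q) = 1 then 1 else 0))"
    unfolding h_def using assms(2)
    by (simp add: sum.If_cases Int_def sum_distrib_left[symmetric])
  also have "\<dots> = (\<Sum>Q\<in>G. \<Sum>R\<in>Pow C. subset_weight p C R * (if card (R \<inter> T Q) = 1 then 1 else 0))"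
    by (rule sum.swap)
  also have "\<dots> = (\<Sum>Q\<in>G. real M * p * (1 - p) ^ (M - 1))"
  proof (rule sum.cong[OF refl])
    fix Q assume Q: "Q \<in> G"
    have "finite (T Q)"
      using finite_subset[OF assms(3)[OF Q] assms(1)] .
    then show "(\<Sum>R\<in>Pow C. subset_weight p C R * (if card (R \<inter> T Q) = 1 then 1 else 0))
        = real M * p * (1 - p) ^ (M - 1)"
      using sum_subset_weight_restrict[OF assms(1) assms(3)[OF Q], of p "\<lambda>R. if card R = 1 then 1 else 0"]
        sum_subset_weight_card_eq_1[of "T Q" p] assms(4)[OF Q] by simp
  qed
  finally have avg: "(\<Sum>R\<in>Pow C. subset_weight p C R * h R) = real (card G) * (real M * p * (1 - p) ^ (M - 1))"
    by simp
  have "0 \<le> subset_weight p C R" for R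
    unfolding subset_weight_def using assms(5,6) by simp
  then obtain R where "R \<in> Pow C" "(\<Sum>R\<in>Pow C. subset_weight p C R * h R) \<le> h R"
    using exists_ge_weighted_average[of "Pow C" "subset_weight p C" h] assms(1)
      sum_subset_weight[OF assms(1)] by auto
  then show ?thesis
    using that avg unfolding h_def by simp
qed

lemma exp_minus_one_le_power:
  assumes "1 \<le> M"
  shows "exp (-1) \<le> (1 - 1 / real M) ^ (M - 1)"
proof (cases "M = 1")
  case False
  then have M: "2 \<le> M"
    using assms by simp
  have M1: "real (M - 1) = real M - 1"
    using M by (simp add: of_nat_diff)
  define x where "x = 1 / real (M - 1)"
  have x: "0 < x" "real (M - 1) * x = 1" "1 - 1 / real M = 1 / (1 + x)"
    unfolding x_def M1 using M by (auto simp: field_simps)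
  have "(1 + x) ^ (M - 1) \<le> exp x ^ (M - 1)"
    using x(1) by (intro power_mono) (auto simp: exp_ge_add_one_self add.commute)
  also have "\<dots> = exp (real (M - 1) * x)"
    by (rule exp_of_nat_mult[symmetric])
  also have "\<dots> = exp 1"
    by (simp only: x(2))
  finally show ?thesis
    unfolding x(3) power_one_over exp_minus using x(1)
    by (simp add: inverse_eq_divide divide_le_eq)
qed (simp add: exp_minus inverse_eq_divide)

section \<open>The construction\<close>

lemma card_coord_generic_flats:
  assumes "I \<subseteq> {..<Suc n}"
  shows "real (card (flats (Suc n) d)) * (2 ^ d - (2 ^ card I - 1))
    \<le> real (card {Q \<in> flats (Suc n) d. coord_generic I Q}) * 2 ^ d"
proof -
  let ?F = "flats (Suc n) d"
  let ?G = "{Q \<in> ?F. coord_generic I Q}"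
  let ?W = "Pow I - {{}}"
  have finI: "finite I"
    using assms finite_subset by blast
  have "?F - ?G \<subseteq> (\<Union>w\<in>?W. {Q \<in> ?F. chi_const_on w Q})"
    unfolding coord_generic_def by blast
  then have "card (?F - ?G) \<le> card (\<Union>w\<in>?W. {Q \<in> ?F. chi_const_on w Q})"
    using finI by (intro card_mono) auto
  also have "\<dots> \<le> (\<Sum>w\<in>?W. card {Q \<in> ?F. chi_const_on w Q})"
    by (rule card_UN_le) (simp add: finI)
  finally have "card (?F - ?G) * 2 ^ d \<le> (\<Sum>w\<in>?W. card {Q \<in> ?F. chi_const_on w Q}) * 2 ^ d"
    by (rule mult_le_mono1)
  also have "\<dots> = (\<Sum>w\<in>?W. card {Q \<in> ?F. chi_const_on w Q} * 2 ^ d)"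
    by (rule sum_distrib_right)
  also have "\<dots> \<le> (\<Sum>w\<in>?W. card ?F)"
  proof (rule sum_mono)
    fix w assume "w \<in> ?W"
    then have "w \<subseteq> {..<Suc n}" "w \<noteq> {}"
      using assms by auto
    then show "card {Q \<in> ?F. chi_const_on w Q} * 2 ^ d \<le> card ?F"
      by (rule card_flats_chi_const_on_le)
  qed
  also have "\<dots> = (2 ^ card I - 1) * card ?F"
    using finI by (simp add: card_Pow)
  finally have "real (card (?F - ?G) * 2 ^ d) \<le> real ((2 ^ card I - 1) * card ?F)"
    by (simp only: of_nat_le_iff)
  moreover have "real (card (?F - ?G)) = real (card ?F) - real (card ?G)"
    by (simp add: card_Diff_subset card_mono of_nat_diff)
  moreover have "real ((2::nat) ^ card I - 1) = 2 ^ card I - 1"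
    by (simp add: of_nat_diff)
  ultimately show ?thesis
    by (simp add: algebra_simps)
qed

text \<open>With \<open>p = 1/M\<close> a random \<open>R \<subseteq> C\<close> meets each \<open>Q \<inter> C\<close> exactly once with probability at
  least \<open>1/e\<close>.\<close>
lemma lam_n_ge_meeting_once:
  assumes G: "G \<subseteq> flats n d" "flats n d \<noteq> {}" "\<beta> * real (card (flats n d)) \<le> real (card G)" "0 \<le> \<beta>"
    and C: "C \<subseteq> F2vec n" "1 \<le> M" "\<And>Q. Q \<in> G \<Longrightarrow> card (Q \<inter> C) = M"
    and A: "\<And>R. R \<subseteq> C \<Longrightarrow> A R \<subseteq> F2vec n"
      "\<And>R Q. R \<subseteq> C \<Longrightarrow> Q \<in> G \<Longrightarrow> card (R \<inter> Q) = 1 \<Longrightarrow> card (Q \<inter> A R) = t"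
  shows "exp (-1) * \<beta> \<le> lam_n n d t"
proof -
  have "finite C" "finite G"
    using finite_subset[OF C(1) finite_F2vec] finite_subset[OF G(1) finite_flats] .
  moreover have "0 \<le> 1 / real M" "1 / real M \<le> 1"
    using C(2) by auto
  ultimately obtain R where R: "R \<subseteq> C" and meet:
    "real (card G) * (real M * (1 / real M) * (1 - 1 / real M) ^ (M - 1))
      \<le> real (card {Q \<in> G. card (R \<inter> (Q \<inter> C)) = 1})"
    using exists_subset_meeting_once[of C G "\<lambda>Q. Q \<inter> C" M "1 / real M"] C(3) by blast
  have "exp (-1) * \<beta> * real (card (flats n d)) \<le> exp (-1) * real (card G)"
    using G(3) by (simp add: mult.assoc)
  also have "\<dots> \<le> real (card G) * (real M * (1 / real M) * (1 - 1 / real M) ^ (M - 1))"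
    using exp_minus_one_le_power[OF C(2)] C(2) by (simp add: mult.commute mult_left_mono)
  also have "\<dots> \<le> real (card {Q \<in> G. card (R \<inter> (Q \<inter> C)) = 1})"
    by (rule meet)
  also have "\<dots> \<le> real (card {Q \<in> flats n d. card (Q \<inter> A R) = t})"
  proof -
    have "R \<inter> (Q \<inter> C) = R \<inter> Q" for Q
      using R by blast
    then have "{Q \<in> G. card (R \<inter> (Q \<inter> C)) = 1} \<subseteq> {Q \<in> flats n d. card (Q \<inter> A R) = t}"
      using A(2)[OF R] G(1) by auto
    then show ?thesis
      by (intro of_nat_mono card_mono) auto
  qed
  finally show ?thesis
    using lam_n_ge[OF G(2) A(1)[OF R]] by simp
qed

lemma card_flat_inter_cylinder:
  assumes "Q \<in> flats n d" "coord_generic {..<m} Q" "S \<subseteq> Pow {..<m}" "m \<le> d"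
  shows "card (Q \<inter> {x \<in> F2vec n. x \<inter> {..<m} \<in> S}) = card S * 2 ^ (d - m)"
proof -
  have "Q \<inter> {x \<in> F2vec n. x \<inter> {..<m} \<in> S} = {x \<in> Q. x \<inter> {..<m} \<in> S}"
    using flat_subset_F2vec[OF assms(1)] by blast
  moreover have "card {x \<in> Q. x \<inter> {..<m} \<in> S} * 2 ^ m = card S * 2 ^ (d - m) * 2 ^ m"
    using card_cylinder_coord_generic[OF _ finite_flat[OF assms(1)] affine_closed_flat[OF assms(1)]
        assms(2,3)] card_flat[OF assms(1)] assms(4)
    by (simp add: power_add[symmetric])
  ultimately show ?thesis
    by simp
qed

lemma card_coord_generic_flats_ge:
  assumes "0 < n" "d \<le> n" "k \<le> d"
  shows "(1 - 1 / 2 ^ k) * real (card (flats n d))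
    \<le> real (card {Q \<in> flats n d. coord_generic {..<d - k} Q})"
proof -
  obtain n' where n': "n = Suc n'"
    using assms(1) gr0_implies_Suc by blast
  let ?G = "{Q \<in> flats n d. coord_generic {..<d - k} Q}"
  have "{..<d - k} \<subseteq> {..<Suc n'}"
    using assms(2) n' by auto
  then have generic: "real (card (flats n d)) * (2 ^ d - (2 ^ (d - k) - 1)) \<le> real (card ?G) * 2 ^ d"
    using card_coord_generic_flats[of "{..<d - k}" n' d] unfolding n' by simp
  have "(2::real) ^ d = 2 ^ (d - k) * 2 ^ k"
    using assms(3) by (simp add: power_add[symmetric])
  then have "(1 - 1 / 2 ^ k) * 2 ^ d \<le> (2 ^ d - (2 ^ (d - k) - 1) :: real)"
    by (simp add: algebra_simps)
  then have "((1 - 1 / 2 ^ k) * real (card (flats n d))) * 2 ^ d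
      \<le> real (card (flats n d)) * (2 ^ d - (2 ^ (d - k) - 1))"
    by (simp add: mult_left_mono mult.commute mult.left_commute)
  also note generic
  finally show ?thesis
    by (rule mult_right_le_imp_le) simp
qed

lemma lam_n_add_one_ge:
  assumes G: "G \<subseteq> flats n d" "flats n d \<noteq> {}" "\<beta> * real (card (flats n d)) \<le> real (card G)" "0 \<le> \<beta>"
    and A\<^sub>0: "A\<^sub>0 \<subseteq> F2vec n" "\<And>Q. Q \<in> G \<Longrightarrow> card (Q \<inter> A\<^sub>0) = s" "s < 2 ^ d"
  shows "exp (-1) * \<beta> \<le> lam_n n d (s + 1)"
proof (rule lam_n_ge_meeting_once[where C = "F2vec n - A\<^sub>0" and M = "2 ^ d - s" and A = "\<lambda>R. A\<^sub>0 \<union> R",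
      OF G])
  show "F2vec n - A\<^sub>0 \<subseteq> F2vec n" "1 \<le> 2 ^ d - s"
    using A\<^sub>0(3) by auto
  show "card (Q \<inter> (F2vec n - A\<^sub>0)) = 2 ^ d - s" if "Q \<in> G" for Q
  proof -
    have Q: "Q \<in> flats n d"
      using that G(1) by blast
    have "Q \<inter> (F2vec n - A\<^sub>0) = Q - (Q \<inter> A\<^sub>0)"
      using flat_subset_F2vec[OF Q] by blast
    then show ?thesis
      using A\<^sub>0(2)[OF that] card_flat[OF Q] finite_flat[OF Q] by (simp add: card_Diff_subset)
  qed
  show "A\<^sub>0 \<union> R \<subseteq> F2vec n" if "R \<subseteq> F2vec n - A\<^sub>0" for R
    using A\<^sub>0(1) that by blast
  show "card (Q \<inter> (A\<^sub>0 \<union> R)) = s + 1"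
    if "R \<subseteq> F2vec n - A\<^sub>0" "Q \<in> G" "card (R \<inter> Q) = 1" for R Q
  proof -
    have "Q \<inter> (A\<^sub>0 \<union> R) = (Q \<inter> A\<^sub>0) \<union> (R \<inter> Q)" "(Q \<inter> A\<^sub>0) \<inter> (R \<inter> Q) = {}"
      using that(1) by blast+
    moreover have "finite Q"
      using that(2) G(1) finite_flat by blast
    ultimately show ?thesis
      using A\<^sub>0(2)[OF that(2)] that(3) by (simp add: card_Un_disjoint)
  qed
qed

lemma lam_n_diff_one_ge:
  assumes G: "G \<subseteq> flats n d" "flats n d \<noteq> {}" "\<beta> * real (card (flats n d)) \<le> real (card G)" "0 \<le> \<beta>"
    and A\<^sub>0: "A\<^sub>0 \<subseteq> F2vec n" "\<And>Q. Q \<in> G \<Longrightarrow> card (Q \<inter> A\<^sub>0) = s" "1 \<le> s"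
  shows "exp (-1) * \<beta> \<le> lam_n n d (s - 1)"
proof (rule lam_n_ge_meeting_once[where A = "\<lambda>R. A\<^sub>0 - R", OF G A\<^sub>0(1,3,2)])
  show "A\<^sub>0 - R \<subseteq> F2vec n" for R
    using A\<^sub>0(1) by blast
  show "card (Q \<inter> (A\<^sub>0 - R)) = s - 1"
    if "R \<subseteq> A\<^sub>0" "Q \<in> G" "card (R \<inter> Q) = 1" for R Q
  proof -
    have "Q \<inter> (A\<^sub>0 - R) = (Q \<inter> A\<^sub>0) - (R \<inter> Q)" "R \<inter> Q \<subseteq> Q \<inter> A\<^sub>0"
      using that(1) by blast+
    moreover have "finite Q"
      using that(2) G(1) finite_flat by blast
    ultimately show ?thesis
      using A\<^sub>0(2)[OF that(2)] that(3) by (simp add: card_Diff_subset)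
  qed
qed

text \<open>The base set \<open>A\<^sub>0\<close> is a union of \<open>j\<close> cosets of a subspace of codimension \<open>d - k\<close>.\<close>
theorem lam_n_ge_construction:
  assumes "1 \<le> d" "d \<le> n" "s = j * 2 ^ k" "1 \<le> s" "s < 2 ^ d"
  shows "exp (-1) * (1 - 1 / 2 ^ k) \<le> lam_n n d (s + 1)"
    and "exp (-1) * (1 - 1 / 2 ^ k) \<le> lam_n n d (s - 1)"
proof -
  have "1 \<le> j"
    using assms(3,4) by (cases j) auto
  then have "(2::nat) ^ k \<le> s"
    using assms(3) by simp
  then have "(2::nat) ^ k < 2 ^ d"
    using assms(5) by linarith
  then have "k < d"
    by simp
  moreover have "(2::nat) ^ d = 2 ^ (d - k) * 2 ^ k"
    using \<open>k < d\<close> by (simp add: power_add[symmetric])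
  ultimately have "j < 2 ^ (d - k)"
    using assms(3,5) by simp
  then have "j \<le> card (Pow {..<d - k})"
    by (simp add: card_Pow)
  then obtain S where S: "S \<subseteq> Pow {..<d - k}" "card S = j"
    by (rule obtain_subset_with_card_n)
  define A\<^sub>0 where "A\<^sub>0 = {x \<in> F2vec n. x \<inter> {..<d - k} \<in> S}"
  define G where "G = {Q \<in> flats n d. coord_generic {..<d - k} Q}"
  have "G \<subseteq> flats n d"
    unfolding G_def by blast
  moreover have "flats n d \<noteq> {}"
    using flats_nonempty[OF assms(2)] .
  moreover have "(1 - 1 / 2 ^ k) * real (card (flats n d)) \<le> real (card G)"
    unfolding G_def using assms(1,2) \<open>k < d\<close> by (intro card_coord_generic_flats_ge) auto
  moreover have "0 \<le> 1 - 1 / (2::real) ^ k"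
    by simp
  moreover have "A\<^sub>0 \<subseteq> F2vec n"
    unfolding A\<^sub>0_def by blast
  moreover have "card (Q \<inter> A\<^sub>0) = s" if "Q \<in> G" for Q
  proof -
    have "d - (d - k) = k"
      using \<open>k < d\<close> by simp
    then show ?thesis
      using card_flat_inter_cylinder[of Q n d "d - k" S] that S assms(3)
      unfolding A\<^sub>0_def G_def by simp
  qed
  ultimately show "exp (-1) * (1 - 1 / 2 ^ k) \<le> lam_n n d (s + 1)"
    and "exp (-1) * (1 - 1 / 2 ^ k) \<le> lam_n n d (s - 1)"
    using lam_n_add_one_ge[of G n d _ A\<^sub>0 s] lam_n_diff_one_ge[of G n d _ A\<^sub>0 s] assms(4,5)
    by blast+
qed

lemma lim_ge_if_eventually_decreasing:
  fixes f :: "nat \<Rightarrow> real"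
  assumes "\<And>n. n \<ge> N \<Longrightarrow> f (Suc n) \<le> f n" "\<And>n. n \<ge> N \<Longrightarrow> c \<le> f n"
  shows "c \<le> lim f"
proof -
  have "decseq (\<lambda>i. f (i + N))"
    using assms(1) by (intro decseq_SucI) simp
  moreover have "\<forall>i. c \<le> f (i + N)"
    using assms(2) by simp
  ultimately obtain L where L: "(\<lambda>i. f (i + N)) \<longlonglongrightarrow> L"
    by (rule decseq_convergent)
  then have "lim f = L"
    by (intro limI) (rule LIMSEQ_offset)
  moreover have "c \<le> L"
    using L assms(2) by (intro LIMSEQ_le_const) auto
  ultimately show ?thesis
    by simp
qed

theorem corollary1p6:
  fixes d s j k :: nat
  assumes "d > 1" and "1 < s" and "s < 2 ^ d"
    and "s = j * 2 ^ k" and "odd j" and "k \<ge> 1"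
  shows "lam_star d (s + 1) \<ge> (1 / exp 1) * (1 - 2 powr (- real k)) \<and>
         lam_star d (s - 1) \<ge> (1 / exp 1) * (1 - 2 powr (- real k))"
proof -
  have bound: "(1 / exp 1) * (1 - 2 powr (- real k)) = exp (-1) * (1 - 1 / 2 ^ k)"
    by (simp add: exp_minus powr_minus powr_realpow inverse_eq_divide)
  have "exp (-1) * (1 - 1 / 2 ^ k) \<le> lam_star d t" if "t = s + 1 \<or> t = s - 1" for t
    unfolding lam_star_def
  proof (rule lim_ge_if_eventually_decreasing[of d])
    fix n assume "d \<le> n"
    then show "lam_n (Suc n) d t \<le> lam_n n d t"
      by (rule lam_n_Suc_le)
    show "exp (-1) * (1 - 1 / 2 ^ k) \<le> lam_n n d t"
      using lam_n_ge_construction[OF _ \<open>d \<le> n\<close> assms(4) _ assms(3)] assms(1,2) that by auto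
  qed
  then show ?thesis
    unfolding bound by blast
qed

end
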